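(* Let $n\ge 2$ and let $D$ be a domain in $\mathbb{R}^n$ with at least two boundary points. Suppose that $x_0\in D$, $0<t<1$, and $y\in B^n(x_0,t\,d(x_0,\partial D))$. Then $$\frac{1}{C'}\leq\frac{\lambda'_D(x_0)}{\lambda'_D(y)}\leq C',\qquad\text{where } C'=\frac{1+\log\frac{1}{1-t}}{1-t}.$$
   Context: $B^n(x,r)=\{y\in\mathbb{R}^n:|y-x|<r\}$ and $d(z,\partial D)=\inf\{|z-a|:a\in\partial D\}$. For $z\in D$, $$\frac{1}{\lambda'_D(z)}=\inf\Big\{|z-a|\Big(1+\Big|\log\frac{|a-b|}{|z-a|}\Big|\Big): a,b\in\partial D\Big\}$$ (with the convention that the expression equals $+\infty$ when $a=b$). *)

theory Defs
  imports "HOL-Analysis.Analysis"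
begin

text \<open>The quantity 1/lambda'_D(z): infimum over boundary pairs a, b (a = b contributes +infinity,
  hence is excluded) of |z-a| (1 + |log(|a-b|/|z-a|)|).\<close>
definition lambda_inv :: "'a::euclidean_space set \<Rightarrow> 'a \<Rightarrow> real" where
  "lambda_inv D z = Inf {dist z a * (1 + \<bar>ln (dist a b / dist z a)\<bar>) | a b.
        a \<in> frontier D \<and> b \<in> frontier D \<and> a \<noteq> b}"

definition lambda' :: "'a::euclidean_space set \<Rightarrow> 'a \<Rightarrow> real" where
  "lambda' D z = 1 / lambda_inv D z"

end

theory Submission
  imports Defs
begin

text \<open>If |y - x0| < t d(x0, boundary D), then for every boundary point a the distances
  |x0 - a| and |y - a| agree up to the factor 1 - t in both directions. Since
  1 + |log(c/q)| <= (1 + |log(q/p)|)(1 + |log(c/p)|), each term of the infimum defining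
  1/lambda' changes by at most the factor r (1 + |log r|) with 1 - t <= r <= 1/(1 - t),
  and the maximum of this factor is C'.\<close>

lemma mult_one_plus_abs_ln_le:
  fixes r s :: real
  assumes "0 < s" "s \<le> 1" "s \<le> r" "r \<le> 1 / s"
  shows "r * (1 + \<bar>ln r\<bar>) \<le> (1 + ln (1 / s)) / s"
proof (cases "r \<le> 1")
  case True
  have r_pos: "0 < r" using assms by linarith
  have "ln (1 / r) \<le> 1 / r - 1" using r_pos by (intro ln_le_minus_one) auto
  then have "r * (1 + \<bar>ln r\<bar>) \<le> r * (1 / r)"
    using True r_pos by (intro mult_left_mono) (auto simp: ln_div abs_if)
  also have "\<dots> = 1" using r_pos by simp
  also have "1 \<le> (1 + ln (1 / s)) / s"
  proof -
    have "ln s \<le> 0" "ln (1 / s) = - ln s" using assms by (simp_all add: ln_div)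
    then have "s \<le> 1 + ln (1 / s)" using assms(2) by linarith
    then show ?thesis using assms by (simp add: le_divide_eq)
  qed
  finally show ?thesis .
next
  case False
  have "ln r \<le> ln (1 / s)" using False assms by (intro ln_mono) auto
  then have "r * (1 + \<bar>ln r\<bar>) \<le> (1 / s) * (1 + ln (1 / s))"
    using False assms by (intro mult_mono) auto
  then show ?thesis by simp
qed

lemma mult_one_plus_abs_ln_div_le:
  fixes c p q :: real
  assumes "0 < c" "0 < p" "0 < q"
  shows "q * (1 + \<bar>ln (c / q)\<bar>) \<le> (q / p) * (1 + \<bar>ln (q / p)\<bar>) * (p * (1 + \<bar>ln (c / p)\<bar>))"
proof -
  have "ln (c / q) = ln (c / p) - ln (q / p)"
    using assms by (simp add: ln_div)
  then have "\<bar>ln (c / q)\<bar> \<le> \<bar>ln (q / p)\<bar> + \<bar>ln (c / p)\<bar>" by linarith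
  also have "\<dots> \<le> \<bar>ln (q / p)\<bar> + \<bar>ln (c / p)\<bar> + \<bar>ln (q / p)\<bar> * \<bar>ln (c / p)\<bar>"
    by simp
  finally have "1 + \<bar>ln (c / q)\<bar> \<le> (1 + \<bar>ln (q / p)\<bar>) * (1 + \<bar>ln (c / p)\<bar>)"
    by (simp add: algebra_simps)
  then have "q * (1 + \<bar>ln (c / q)\<bar>) \<le> q * ((1 + \<bar>ln (q / p)\<bar>) * (1 + \<bar>ln (c / p)\<bar>))"
    using assms by (intro mult_left_mono) auto
  also have "\<dots> = (q / p) * (1 + \<bar>ln (q / p)\<bar>) * (p * (1 + \<bar>ln (c / p)\<bar>))"
    using assms by simp
  finally show ?thesis .
qed

lemma mult_one_plus_abs_ln_div_comparable:
  fixes c p q s :: real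
  assumes "0 < c" "0 < p" "0 < s" "s \<le> 1" "s * p \<le> q" "s * q \<le> p"
  shows "q * (1 + \<bar>ln (c / q)\<bar>) \<le> (1 + ln (1 / s)) / s * (p * (1 + \<bar>ln (c / p)\<bar>))"
proof -
  have q_pos: "0 < q" using mult_pos_pos[OF assms(3,2)] assms(5) by linarith
  have "s \<le> q / p" "q / p \<le> 1 / s"
    using assms q_pos by (simp_all add: field_simps)
  then have "(q / p) * (1 + \<bar>ln (q / p)\<bar>) \<le> (1 + ln (1 / s)) / s"
    using assms by (intro mult_one_plus_abs_ln_le)
  then have "(q / p) * (1 + \<bar>ln (q / p)\<bar>) * (p * (1 + \<bar>ln (c / p)\<bar>))
      \<le> (1 + ln (1 / s)) / s * (p * (1 + \<bar>ln (c / p)\<bar>))"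
    using assms by (intro mult_right_mono) auto
  with mult_one_plus_abs_ln_div_le[OF assms(1,2) q_pos] show ?thesis by linarith
qed

lemma INF_le_mult_INF:
  fixes f g :: "'i \<Rightarrow> real"
  assumes "I \<noteq> {}" "bdd_below (f ` I)" "0 < C" "\<And>i. i \<in> I \<Longrightarrow> f i \<le> C * g i"
  shows "(INF i\<in>I. f i) \<le> C * (INF i\<in>I. g i)"
proof -
  have "(INF i\<in>I. f i) / C \<le> (INF i\<in>I. g i)"
  proof (rule cINF_greatest[OF assms(1)])
    fix i assume "i \<in> I"
    then have "(INF i\<in>I. f i) \<le> C * g i"
      using assms(4) cINF_lower[OF assms(2)] by (meson order_trans)
    then show "(INF i\<in>I. f i) / C \<le> g i" using assms(3) by (simp add: field_simps)
  qed
  then show ?thesis using assms(3) by (simp add: field_simps)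
qed

lemma dist_comparable_if_dist_lt_infdist:
  fixes x y a :: "'a::metric_space"
  assumes "a \<in> A" "dist x y < t * infdist x A" "0 \<le> t"
  shows "(1 - t) * dist x a \<le> dist y a" "(1 - t) * dist y a \<le> dist x a"
proof -
  have "t * infdist x A \<le> t * dist x a"
    using infdist_le[OF assms(1)] assms(3) by (rule mult_left_mono)
  then have xy: "dist x y \<le> t * dist x a" using assms(2) by linarith
  then show "(1 - t) * dist x a \<le> dist y a"
    using dist_triangle[of x a y] by (simp add: dist_commute algebra_simps)
  have y_near: "dist y a \<le> (1 + t) * dist x a"
    using xy dist_triangle[of y a x] by (simp add: dist_commute algebra_simps)
  show "(1 - t) * dist y a \<le> dist x a"
  proof (cases "t \<le> 1")
    case True
    then have "(1 - t) * dist y a \<le> (1 - t) * ((1 + t) * dist x a)"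
      using y_near by (intro mult_left_mono) auto
    also have "\<dots> = dist x a - t\<^sup>2 * dist x a" by (simp add: algebra_simps power2_eq_square)
    finally show ?thesis
      using mult_nonneg_nonneg[OF zero_le_power2[of t] zero_le_dist[of x a]] by linarith
  next
    case False
    then have "(1 - t) * dist y a \<le> 0" by (simp add: mult_nonpos_nonneg)
    then show ?thesis using zero_le_dist[of x a] by linarith
  qed
qed

lemma lambda_inv_eq_INF:
  "lambda_inv D z = (INF (a, b)\<in>{(a, b). a \<in> frontier D \<and> b \<in> frontier D \<and> a \<noteq> b}.
     dist z a * (1 + \<bar>ln (dist a b / dist z a)\<bar>))"
  unfolding lambda_inv_def by (rule arg_cong[where f = Inf]) auto

lemma infdist_le_lambda_inv:
  assumes "a0 \<in> frontier D" "b0 \<in> frontier D" "a0 \<noteq> b0"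
  shows "infdist z (frontier D) \<le> lambda_inv D z"
  unfolding lambda_inv_eq_INF
proof (rule cINF_greatest)
  show "{(a, b). a \<in> frontier D \<and> b \<in> frontier D \<and> a \<noteq> b} \<noteq> {}" using assms by blast
next
  fix ab assume "ab \<in> {(a, b). a \<in> frontier D \<and> b \<in> frontier D \<and> a \<noteq> b}"
  then obtain a b where ab: "ab = (a, b)" "a \<in> frontier D" by blast
  have "infdist z (frontier D) \<le> dist z a * 1" using infdist_le[OF ab(2)] by simp
  also have "\<dots> \<le> dist z a * (1 + \<bar>ln (dist a b / dist z a)\<bar>)" by (intro mult_left_mono) auto
  finally show "infdist z (frontier D) \<le> (case ab of (a, b) \<Rightarrow> dist z a * (1 + \<bar>ln (dist a b / dist z a)\<bar>))"
    using ab by simp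
qed

lemma lambda_inv_le_mult:
  assumes "a0 \<in> frontier D" "b0 \<in> frontier D" "a0 \<noteq> b0" "0 < C"
    and "\<And>a b. a \<in> frontier D \<Longrightarrow> b \<in> frontier D \<Longrightarrow> a \<noteq> b \<Longrightarrow>
      dist y a * (1 + \<bar>ln (dist a b / dist y a)\<bar>) \<le> C * (dist x a * (1 + \<bar>ln (dist a b / dist x a)\<bar>))"
  shows "lambda_inv D y \<le> C * lambda_inv D x"
  unfolding lambda_inv_eq_INF
proof (rule INF_le_mult_INF)
  show "{(a, b). a \<in> frontier D \<and> b \<in> frontier D \<and> a \<noteq> b} \<noteq> {}" using assms by blast
  show "bdd_below ((\<lambda>(a, b). dist y a * (1 + \<bar>ln (dist a b / dist y a)\<bar>)) `
      {(a, b). a \<in> frontier D \<and> b \<in> frontier D \<and> a \<noteq> b})"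
    by (rule bdd_belowI[of _ 0]) auto
qed (use assms in auto)

lemma lambda_inv_le_mult_if_dist_comparable:
  assumes "a0 \<in> frontier D" "b0 \<in> frontier D" "a0 \<noteq> b0" "0 < s" "s \<le> 1"
    and "\<And>a. a \<in> frontier D \<Longrightarrow> 0 < dist x a \<and> s * dist x a \<le> dist y a \<and> s * dist y a \<le> dist x a"
  shows "lambda_inv D y \<le> (1 + ln (1 / s)) / s * lambda_inv D x"
proof (rule lambda_inv_le_mult[OF assms(1-3)])
  have "0 \<le> ln (1 / s)" using assms(4,5) by simp
  then show "0 < (1 + ln (1 / s)) / s" using assms(4) by (intro divide_pos_pos) linarith+
next
  fix a b assume "a \<in> frontier D" "b \<in> frontier D" "a \<noteq> b"
  then show "dist y a * (1 + \<bar>ln (dist a b / dist y a)\<bar>)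
      \<le> (1 + ln (1 / s)) / s * (dist x a * (1 + \<bar>ln (dist a b / dist x a)\<bar>))"
    using assms(4,5,6) by (intro mult_one_plus_abs_ln_div_comparable) auto
qed

lemma ratio_bounds_if_mutually_bounded:
  fixes u v C :: real
  assumes "0 < u" "0 < C" "v \<le> C * u" "u \<le> C * v"
  shows "1 / C \<le> v / u \<and> v / u \<le> C"
  using assms by (simp add: divide_le_eq le_divide_eq mult.commute)

theorem lemma9:
  fixes D :: "'a::euclidean_space set" and x0 y :: 'a and t :: real
  assumes "DIM('a) \<ge> 2"
    and "open D" and "connected D"
    and "\<exists>a b. a \<in> frontier D \<and> b \<in> frontier D \<and> a \<noteq> b"
    and "x0 \<in> D" and "0 < t" and "t < 1"
    and "y \<in> ball x0 (t * infdist x0 (frontier D))"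
  shows "1 / ((1 + ln (1 / (1 - t))) / (1 - t)) \<le> lambda' D x0 / lambda' D y
         \<and> lambda' D x0 / lambda' D y \<le> (1 + ln (1 / (1 - t))) / (1 - t)"
proof -
  obtain a0 b0 where ab0: "a0 \<in> frontier D" "b0 \<in> frontier D" "a0 \<noteq> b0" using assms(4) by blast
  have "x0 \<notin> frontier D" using assms(2,5) by (simp add: frontier_def interior_open)
  then have d_pos: "0 < infdist x0 (frontier D)"
    using infdist_pos_not_in_closed[OF frontier_closed] ab0 by blast
  have y_close: "dist x0 y < t * infdist x0 (frontier D)" using assms(8) by simp
  note comparable = dist_comparable_if_dist_lt_infdist[OF _ y_close less_imp_le[OF assms(6)]]
  have x0_dist_pos: "0 < dist x0 a" if "a \<in> frontier D" for a
    using infdist_le[OF that, of x0] d_pos by linarith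
  have y_dist_pos: "0 < dist y a" if "a \<in> frontier D" for a
    using mult_pos_pos[OF _ x0_dist_pos[OF that], of "1 - t"] comparable(1)[OF that] assms(7)
    by linarith
  have "lambda_inv D y \<le> (1 + ln (1 / (1 - t))) / (1 - t) * lambda_inv D x0"
    using ab0 assms(6,7) x0_dist_pos comparable by (intro lambda_inv_le_mult_if_dist_comparable) auto
  moreover have "lambda_inv D x0 \<le> (1 + ln (1 / (1 - t))) / (1 - t) * lambda_inv D y"
    using ab0 assms(6,7) y_dist_pos comparable by (intro lambda_inv_le_mult_if_dist_comparable) auto
  moreover have "0 < lambda_inv D x0"
    using d_pos infdist_le_lambda_inv[OF ab0] by (rule order.strict_trans2)
  moreover have "0 < (1 + ln (1 / (1 - t))) / (1 - t)"
    using assms(6,7) by (simp add: add_pos_nonneg)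
  moreover have "lambda' D x0 / lambda' D y = lambda_inv D y / lambda_inv D x0"
    unfolding lambda'_def by simp
  ultimately show ?thesis using ratio_bounds_if_mutually_bounded by presburger
qed

end
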